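(* Let $f:U\to\mathbb{R}^3$ be a Guichard net with Lamé coefficients $H_1,H_2,H_3$, let $h_1,h_2,h_3:U\to\mathbb{R}$ be functions satisfying $$\partial_xh_3=-\tfrac{H_2}{H_3}\kappa_{13},\quad \partial_yh_3=\tfrac{H_1}{H_3}\kappa_{23},\quad \partial_zh_3=-\tfrac{H_1H_2}{H_3^2}(\kappa_{31}-\kappa_{32}),\quad h_1=h_3+\tfrac{H_2}{H_1H_3},\quad h_2=h_3-\tfrac{H_1}{H_2H_3},$$ let $c\in\mathbb{R}$, and let $f^\star_c$ be the corresponding dual system, defined by $df^\star_c=\sum_{i=1}^3h^\star_i\,\partial_if\,dx_i$ with $h^\star_i=-(h_i+c)^2+\frac{\varepsilon_i}{H_i^2}$, $(\varepsilon_1,\varepsilon_2,\varepsilon_3)=(1,1,-1)$. Then $f^\star_c$ is again a Guichard net, i.e. its Lamé coefficients $H^\star_i=h^\star_iH_i$ satisfy $(H^\star_1)^2+(H^\star_2)^2-(H^\star_3)^2=0$.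
   Context: $U\subset\mathbb{R}^3$ open connected, coordinates $(x_1,x_2,x_3)=(x,y,z)$, $\partial_i=\partial_{x_i}$. A triply orthogonal system is $f:U\to\mathbb{R}^3$ with $\det(\partial_1f,\partial_2f,\partial_3f)\ne0$ and $(\partial_if,\partial_jf)=0$ for $i\ne j$. For $(i,j,k)$ a cyclic permutation of $(1,2,3)$, $N_i=\partial_jf\times\partial_kf/|\partial_jf\times\partial_kf|$, Lamé coefficients $H_i$ by $\partial_if=H_iN_i$, rotational coefficients $\beta_{ij}=\frac1{H_i}\partial_iH_j$, and $\kappa_{ij}=-\beta_{ij}/H_j$ is the principal curvature of the coordinate surface $x_i=\mathrm{const}$ along the $x_j$-lines. A Guichard net is a triply orthogonal system with $H_1^2+H_2^2-H_3^2=0$. A map $g$ with $dg=\sum_ik_i\partial_if\,dx_i$ (a Combescure transform of $f$) has Lamé coefficients $k_iH_i$ with respect to the same $N_i$. *)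

theory Defs
  imports "HOL-Analysis.Analysis" "HOL-Analysis.Cross3"
begin

text \<open>Coordinates on R^3 are indexed by the numeral type 3; the indices 1,2,3 of the
paper are (1::3), (2::3), (3::3) (the latter equals 0 in the ring type 3), so that
(i, i+1, i+2) runs through the cyclic permutations of (1,2,3).\<close>

definition partial :: "3 \<Rightarrow> (real^3 \<Rightarrow> 'b::real_normed_vector) \<Rightarrow> real^3 \<Rightarrow> 'b" where
  "partial i g x = vector_derivative (\<lambda>t. g (x + t *\<^sub>R axis i 1)) (at 0)"

definition has_partials_on :: "(real^3) set \<Rightarrow> (real^3 \<Rightarrow> 'b::real_normed_vector) \<Rightarrow> bool" where
  "has_partials_on U g \<longleftrightarrow> (\<forall>x\<in>U. \<forall>i. (\<lambda>t. g (x + t *\<^sub>R axis i 1)) differentiable (at 0))"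

definition iter_partial :: "3 list \<Rightarrow> (real^3 \<Rightarrow> 'b::real_normed_vector) \<Rightarrow> real^3 \<Rightarrow> 'b" where
  "iter_partial is g = foldr partial is g"

definition smooth_on3 :: "(real^3) set \<Rightarrow> (real^3 \<Rightarrow> 'b::real_normed_vector) \<Rightarrow> bool" where
  "smooth_on3 U g \<longleftrightarrow> (\<forall>is. has_partials_on U (iter_partial is g) \<and> continuous_on U (iter_partial is g))"

definition normal :: "(real^3 \<Rightarrow> real^3) \<Rightarrow> 3 \<Rightarrow> real^3 \<Rightarrow> real^3" where
  "normal f i x = (let c = cross3 (partial (i+1) f x) (partial (i+2) f x) in (1 / norm c) *\<^sub>R c)"

definition lame :: "(real^3 \<Rightarrow> real^3) \<Rightarrow> 3 \<Rightarrow> real^3 \<Rightarrow> real" where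
  "lame f i x = partial i f x \<bullet> normal f i x"

definition rot_coeff :: "(real^3 \<Rightarrow> real^3) \<Rightarrow> 3 \<Rightarrow> 3 \<Rightarrow> real^3 \<Rightarrow> real" where
  "rot_coeff f i j x = partial i (lame f j) x / lame f i x"

definition kappa :: "(real^3 \<Rightarrow> real^3) \<Rightarrow> 3 \<Rightarrow> 3 \<Rightarrow> real^3 \<Rightarrow> real" where
  "kappa f i j x = - rot_coeff f i j x / lame f j x"

definition triply_orthogonal :: "(real^3) set \<Rightarrow> (real^3 \<Rightarrow> real^3) \<Rightarrow> bool" where
  "triply_orthogonal U f \<longleftrightarrow> smooth_on3 U f \<and>
     (\<forall>x\<in>U. det (\<chi> i. partial i f x) \<noteq> 0 \<and>
             (\<forall>i j. i \<noteq> j \<longrightarrow> partial i f x \<bullet> partial j f x = 0))"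

definition guichard_net :: "(real^3) set \<Rightarrow> (real^3 \<Rightarrow> real^3) \<Rightarrow> bool" where
  "guichard_net U f \<longleftrightarrow> triply_orthogonal U f \<and>
     (\<forall>x\<in>U. (lame f 1 x)\<^sup>2 + (lame f 2 x)\<^sup>2 - (lame f 3 x)\<^sup>2 = 0)"

definition eps :: "3 \<Rightarrow> real" where
  "eps i = (if i = 3 then -1 else 1)"

end

theory Submission
  imports Defs
begin

text \<open>The partial derivatives of the dual system are \<open>h\<^sup>\<star>\<^sub>i \<partial>\<^sub>i f\<close>, so its Lame
coefficients are \<open>h\<^sup>\<star>\<^sub>i H\<^sub>i\<close> with respect to the normals of \<open>f\<close>. The Guichard condition
for them is then a pointwise algebraic identity: with \<open>a = h\<^sub>3 + c\<close> and \<open>p = 1/H\<^sub>3\<^sup>2 - a\<^sup>2\<close>,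
the relations for \<open>h\<^sub>1, h\<^sub>2\<close> and \<open>H\<^sub>3\<^sup>2 = H\<^sub>1\<^sup>2 + H\<^sub>2\<^sup>2\<close> give
\<open>H\<^sup>\<star>\<^sub>1 + i H\<^sup>\<star>\<^sub>2 = (H\<^sub>1 + i H\<^sub>2)(p + 2 i a/H\<^sub>3)\<close>, whose squared modulus is
\<open>H\<^sub>3\<^sup>2 (a\<^sup>2 + 1/H\<^sub>3\<^sup>2)\<^sup>2 = (H\<^sup>\<star>\<^sub>3)\<^sup>2\<close>. The differential equations for \<open>h\<^sub>3\<close> only
ensure that the dual system exists; the identity itself does not use them.\<close>

lemma cross3_parallel_of_orthogonal:
  fixes v a b :: "real^3"
  assumes "v \<bullet> a = 0" "v \<bullet> b = 0"
  shows "(cross3 a b \<bullet> cross3 a b) *\<^sub>R v = (v \<bullet> cross3 a b) *\<^sub>R cross3 a b"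
proof -
  have "cross3 v (cross3 a b) = (v \<bullet> b) *\<^sub>R a - (v \<bullet> a) *\<^sub>R b"
    unfolding vec_eq_iff forall_3 by (simp add: cross3_def inner_vec_def sum_3 algebra_simps)
  with assms have "cross3 v (cross3 a b) = 0" by simp
  moreover have "cross3 (cross3 a b) (cross3 v (cross3 a b))
      = (cross3 a b \<bullet> cross3 a b) *\<^sub>R v - (v \<bullet> cross3 a b) *\<^sub>R cross3 a b"
    unfolding vec_eq_iff forall_3 by (simp add: cross3_def inner_vec_def sum_3 algebra_simps)
  ultimately show ?thesis by simp
qed

lemma det_vec_lambda_cyclic:
  fixes F :: "3 \<Rightarrow> real^3"
  shows "det (\<chi> i. F i) = F i \<bullet> cross3 (F (i + 1)) (F (i + 2))"
proof -
  have "(\<chi> i. F i) = vector [F 1, F 2, F 3]"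
    unfolding vec_eq_iff by (metis (mono_tags) exhaust_3 vector_3 vec_lambda_beta)
  then have det: "det (\<chi> i. F i) = F 1 \<bullet> cross3 (F 2) (F 3)"
    by (simp add: dot_cross_det)
  have succ: "(2::3) + 1 = 3" "(3::3) + 1 = 1" "(3::3) + 2 = 2" "(2::3) + 2 = 1"
    "(1::3) + 1 = 2" "(1::3) + 2 = 3"
    by simp_all
  have cyclic: "F 2 \<bullet> cross3 (F 3) (F 1) = F 1 \<bullet> cross3 (F 2) (F 3)"
    "F 3 \<bullet> cross3 (F 1) (F 2) = F 1 \<bullet> cross3 (F 2) (F 3)"
    by (simp_all add: cross3_simps)
  consider "i = 1" | "i = 2" | "i = 3" using exhaust_3 by blast
  then show ?thesis
    by cases (simp_all only: succ det cyclic)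
qed

lemma triply_orthogonal_partial_eq_lame_normal:
  assumes "triply_orthogonal U f" and "x \<in> U"
  shows "lame f i x \<noteq> 0" and "partial i f x = lame f i x *\<^sub>R normal f i x"
proof -
  define v c where "v = partial i f x"
    and "c = cross3 (partial (i + 1) f x) (partial (i + 2) f x)"
  have det: "det (\<chi> i. partial i f x) \<noteq> 0"
    and orth: "\<And>i j. i \<noteq> j \<Longrightarrow> partial i f x \<bullet> partial j f x = 0"
    using assms unfolding triply_orthogonal_def by auto
  have vc: "v \<bullet> c \<noteq> 0"
    using det det_vec_lambda_cyclic[of "\<lambda>i. partial i f x" i] by (simp add: v_def c_def)
  then have c: "c \<noteq> 0" by auto
  have "i \<noteq> i + 1" "i \<noteq> i + 2"
    using exhaust_3[of i] by auto
  then have par: "(c \<bullet> c) *\<^sub>R v = (v \<bullet> c) *\<^sub>R c"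
    unfolding v_def c_def by (intro cross3_parallel_of_orthogonal orth)
  have lame: "lame f i x = (v \<bullet> c) / norm c"
    and normal: "normal f i x = (1 / norm c) *\<^sub>R c"
    by (simp_all add: lame_def normal_def Let_def v_def c_def)
  show "lame f i x \<noteq> 0" using lame vc c by simp
  have "v = inverse (c \<bullet> c) *\<^sub>R ((c \<bullet> c) *\<^sub>R v)"
    using c by simp
  also have "\<dots> = ((v \<bullet> c) / (c \<bullet> c)) *\<^sub>R c"
    by (simp add: par divide_inverse_commute)
  also have "\<dots> = lame f i x *\<^sub>R normal f i x"
    using c by (simp add: lame normal power2_norm_eq_inner[symmetric] power2_eq_square)
  finally show "partial i f x = lame f i x *\<^sub>R normal f i x" by (simp add: v_def)
qed

lemma partial_eq_of_has_derivative:
  fixes g :: "real^3 \<Rightarrow> 'b::real_normed_vector"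
  assumes "(g has_derivative (\<lambda>v. \<Sum>j\<in>UNIV. v $ j *\<^sub>R D j)) (at x)"
  shows "partial i g x = D i"
proof -
  have line: "((\<lambda>t. x + t *\<^sub>R axis i 1) has_derivative (\<lambda>t. t *\<^sub>R axis i 1)) (at 0)"
    by (auto intro!: derivative_eq_intros)
  have "(\<Sum>j\<in>UNIV. (t *\<^sub>R axis i 1) $ j *\<^sub>R D j) = (\<Sum>j\<in>UNIV. if j = i then t *\<^sub>R D i else 0)"
    for t by (rule sum.cong) (auto simp: axis_def)
  then have D: "(\<Sum>j\<in>UNIV. (t *\<^sub>R axis i 1) $ j *\<^sub>R D j) = t *\<^sub>R D i" for t
    by simp
  have "(g has_derivative (\<lambda>v. \<Sum>j\<in>UNIV. v $ j *\<^sub>R D j)) (at (x + 0 *\<^sub>R axis i 1))"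
    using assms by simp
  from diff_chain_at[OF line this]
  have "((\<lambda>t. g (x + t *\<^sub>R axis i 1)) has_derivative (\<lambda>t. t *\<^sub>R D i)) (at 0)"
    unfolding o_def D .
  then show ?thesis
    unfolding partial_def has_vector_derivative_def[symmetric] by (rule vector_derivative_at)
qed

lemma guichard_dual_identity:
  fixes H1 H2 H3 a :: real
  assumes "H1 \<noteq> 0" "H2 \<noteq> 0" "H3 \<noteq> 0" and guichard: "H3\<^sup>2 = H1\<^sup>2 + H2\<^sup>2"
  shows "((- (a + H2 / (H1 * H3))\<^sup>2 + 1 / H1\<^sup>2) * H1)\<^sup>2
       + ((- (a - H1 / (H2 * H3))\<^sup>2 + 1 / H2\<^sup>2) * H2)\<^sup>2
       - ((- a\<^sup>2 - 1 / H3\<^sup>2) * H3)\<^sup>2 = 0"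
proof -
  define p where "p = 1 / H3\<^sup>2 - a\<^sup>2"
  have "(- (a + H2 / (H1 * H3))\<^sup>2 + 1 / H1\<^sup>2) * H1
      = H1 * p - 2 * a * H2 / H3 + (H3\<^sup>2 - H2\<^sup>2 - H1\<^sup>2) / (H1 * H3\<^sup>2)"
    using assms(1-3) by (simp add: p_def field_simps power2_eq_square)
  then have dual_lame1: "(- (a + H2 / (H1 * H3))\<^sup>2 + 1 / H1\<^sup>2) * H1 = H1 * p - 2 * a * H2 / H3"
    using guichard by simp
  have "(- (a - H1 / (H2 * H3))\<^sup>2 + 1 / H2\<^sup>2) * H2
      = H2 * p + 2 * a * H1 / H3 + (H3\<^sup>2 - H2\<^sup>2 - H1\<^sup>2) / (H2 * H3\<^sup>2)"
    using assms(1-3) by (simp add: p_def field_simps power2_eq_square)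
  then have dual_lame2: "(- (a - H1 / (H2 * H3))\<^sup>2 + 1 / H2\<^sup>2) * H2 = H2 * p + 2 * a * H1 / H3"
    using guichard by simp
  have "(H1 * p - 2 * a * H2 / H3)\<^sup>2 + (H2 * p + 2 * a * H1 / H3)\<^sup>2
      = (H1\<^sup>2 + H2\<^sup>2) * (p\<^sup>2 + 4 * a\<^sup>2 / H3\<^sup>2)"
    using assms(3) by (simp add: field_simps power2_eq_square)
  also have "\<dots> = H3\<^sup>2 * (p\<^sup>2 + 4 * a\<^sup>2 / H3\<^sup>2)"
    by (simp add: guichard)
  also have "\<dots> = ((- a\<^sup>2 - 1 / H3\<^sup>2) * H3)\<^sup>2"
    using assms(3) by (simp add: p_def field_simps power2_eq_square)
  finally show ?thesis unfolding dual_lame1 dual_lame2 by simp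
qed

theorem proposition4p4:
  fixes U :: "(real^3) set" and f g :: "real^3 \<Rightarrow> real^3"
    and h :: "3 \<Rightarrow> real^3 \<Rightarrow> real" and c :: real
  assumes U: "open U" "connected U"
    and G: "guichard_net U f"
    and h3_diff: "has_partials_on U (h 3)"
    and h3_x: "\<forall>x\<in>U. partial 1 (h 3) x = - lame f 2 x / lame f 3 x * kappa f 1 3 x"
    and h3_y: "\<forall>x\<in>U. partial 2 (h 3) x = lame f 1 x / lame f 3 x * kappa f 2 3 x"
    and h3_z: "\<forall>x\<in>U. partial 3 (h 3) x =
                 - (lame f 1 x * lame f 2 x) / (lame f 3 x)\<^sup>2 * (kappa f 3 1 x - kappa f 3 2 x)"
    and h1: "\<forall>x\<in>U. h 1 x = h 3 x + lame f 2 x / (lame f 1 x * lame f 3 x)"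
    and h2: "\<forall>x\<in>U. h 2 x = h 3 x - lame f 1 x / (lame f 2 x * lame f 3 x)"
    and dual: "\<forall>x\<in>U. (g has_derivative
                 (\<lambda>v. \<Sum>i\<in>UNIV. (v $ i * (- (h i x + c)\<^sup>2 + eps i / (lame f i x)\<^sup>2)) *\<^sub>R partial i f x))
                 (at x)"
  shows "\<forall>x\<in>U.
           (\<forall>i. partial i g x =
                  ((- (h i x + c)\<^sup>2 + eps i / (lame f i x)\<^sup>2) * lame f i x) *\<^sub>R normal f i x) \<and>
           ((- (h 1 x + c)\<^sup>2 + eps 1 / (lame f 1 x)\<^sup>2) * lame f 1 x)\<^sup>2
         + ((- (h 2 x + c)\<^sup>2 + eps 2 / (lame f 2 x)\<^sup>2) * lame f 2 x)\<^sup>2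
         - ((- (h 3 x + c)\<^sup>2 + eps 3 / (lame f 3 x)\<^sup>2) * lame f 3 x)\<^sup>2 = 0"
proof (intro ballI conjI allI, goal_cases)
  case (1 x i)
  then have T: "triply_orthogonal U f"
    using G unfolding guichard_net_def by simp
  have "partial i g x = (- (h i x + c)\<^sup>2 + eps i / (lame f i x)\<^sup>2) *\<^sub>R partial i f x"
    using dual 1 by (intro partial_eq_of_has_derivative) (simp add: scaleR_scaleR)
  then show ?case
    using triply_orthogonal_partial_eq_lame_normal(2)[OF T 1] by simp
next
  case (2 x)
  have T: "triply_orthogonal U f" and guichard: "(lame f 3 x)\<^sup>2 = (lame f 1 x)\<^sup>2 + (lame f 2 x)\<^sup>2"
    using G 2 unfolding guichard_net_def by auto
  have "lame f i x \<noteq> 0" for i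
    using triply_orthogonal_partial_eq_lame_normal(1)[OF T 2] .
  note identity = guichard_dual_identity[OF this this this guichard, of "h 3 x + c"]
  have hc: "h 1 x + c = (h 3 x + c) + lame f 2 x / (lame f 1 x * lame f 3 x)"
    "h 2 x + c = (h 3 x + c) - lame f 1 x / (lame f 2 x * lame f 3 x)"
    using h1 h2 2 by simp_all
  show ?case
    using identity unfolding hc eps_def by simp
qed

end
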